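(* Let $h$ be analytic and convex (univalent) in $\mathbb{D}=\{|z|<1\}$ and let $u(z)=h(z)+\frac{1}{2}(1-|z|^{2})\,zh'(z)$. Then $u$ is univalent on the disk $|z|<\sqrt{2}-1$.
   Context: A convex function is an analytic univalent function mapping $\mathbb{D}$ onto a convex domain. *)

theory Defs
  imports "HOL-Complex_Analysis.Complex_Analysis"
begin

definition convex_univalent :: "(complex \<Rightarrow> complex) \<Rightarrow> bool" where
  "convex_univalent h \<longleftrightarrow>
     h holomorphic_on ball 0 1 \<and> inj_on h (ball 0 1) \<and> convex (h ` ball 0 1)"

end

theory Submission
  imports Defs
begin

text \<open>Let \<open>g\<close> be the inverse of \<open>h\<close>. Convexity of \<open>h(\<bbbD>)\<close> together with the Schwarz lemma shows that
  \<open>h\<close> maps every disk \<open>|z| \<le> \<rho> < 1\<close> onto a convex set; consequently \<open>h(\<bbbD>)\<close> has a supporting line at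
  every \<open>h z\<close>, which forces \<open>Re (1 + z h''(z) / h'(z)) \<ge> 0\<close> and, by the Schwarz lemma again,
  \<open>|p - 1| \<le> |z| |p + 1|\<close> for \<open>p = 1 + z h''/h'\<close>. If \<open>|z\<^sub>1|, |z\<^sub>2| \<le> \<rho>\<close>, the path \<open>\<gamma> = g \<circ> [h z\<^sub>1, h z\<^sub>2]\<close>
  stays in \<open>|z| \<le> \<rho>\<close>, and along it the derivative of \<open>u \<circ> \<gamma>\<close> differs from \<open>\<Delta> = h z\<^sub>2 - h z\<^sub>1\<close> by at
  most \<open>(1/2 + \<rho> + \<rho>\<^sup>2/2) |\<Delta>|\<close>. For \<open>\<rho> < \<surd>2 - 1\<close> this factor is below \<open>1\<close>, so by the mean value
  theorem \<open>u z\<^sub>1 = u z\<^sub>2\<close> forces \<open>\<Delta> = 0\<close>.\<close>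

lemma has_real_derivative_nonpos_at_right_max:
  fixes f :: "real \<Rightarrow> real"
  assumes der: "DERIV f a :> l" and "0 < e"
    and max: "\<And>t. a < t \<Longrightarrow> t < a + e \<Longrightarrow> f t \<le> f a"
  shows "l \<le> 0"
proof (rule ccontr)
  assume "\<not> l \<le> 0"
  then obtain d where "0 < d" and inc: "\<And>s. 0 < s \<Longrightarrow> s < d \<Longrightarrow> f a < f (a + s)"
    using DERIV_pos_inc_right[OF der] by force
  define s where "s = min d e / 2"
  have "0 < s" "s < d" "s < e" using \<open>0 < d\<close> \<open>0 < e\<close> by (auto simp: s_def)
  then show False using inc[of s] max[of "a + s"] by simp
qed

lemma second_derivative_nonpos_at_max:
  fixes f f' :: "real \<Rightarrow> real"
  assumes der: "\<And>t. DERIV f t :> f' t" and der2: "DERIV f' a :> l"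
    and max: "\<And>t. f t \<le> f a"
  shows "l \<le> 0"
proof (rule ccontr)
  assume "\<not> l \<le> 0"
  have "f' a = 0" using DERIV_local_max[OF der zero_less_one] max by blast
  moreover obtain d where "0 < d" and inc: "\<And>s. 0 < s \<Longrightarrow> s < d \<Longrightarrow> f' a < f' (a + s)"
    using DERIV_pos_inc_right[OF der2] \<open>\<not> l \<le> 0\<close> by force
  moreover obtain \<xi> where "a < \<xi>" "\<xi> < a + d / 2" "f (a + d / 2) - f a = (a + d / 2 - a) * f' \<xi>"
    using MVT2[of a "a + d / 2" f f'] der \<open>0 < d\<close> by auto
  ultimately have "0 < (a + d / 2 - a) * f' \<xi>" "f (a + d / 2) - f a = (a + d / 2 - a) * f' \<xi>"
    using inc[of "\<xi> - a"] \<open>0 < d\<close> by auto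
  then have "f a < f (a + d / 2)" by linarith
  then show False using max[of "a + d / 2"] by simp
qed

lemma norm_diff_le_of_derivative_near:
  fixes f :: "real \<Rightarrow> 'a::real_inner"
  assumes near: "\<And>t. t \<in> {0..1} \<Longrightarrow> \<exists>f'. (f has_vector_derivative f') (at t) \<and> norm (f' - v) \<le> B"
  shows "norm (f 1 - f 0 - v) \<le> B"
proof -
  define F where "F = (\<lambda>t. f t - t *\<^sub>R v)"
  have derF: "(F has_vector_derivative vector_derivative f (at t) - v) (at t)"
    and near': "norm (vector_derivative f (at t) - v) \<le> B" if "t \<in> {0..1}" for t
    using near[OF that] vector_derivative_at[of f _ t]
    by (auto simp: F_def intro!: derivative_eq_intros)
  have "continuous_on {0..1} F"
    using derF by (intro continuous_at_imp_continuous_on ballI has_vector_derivative_continuous) auto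
  then obtain t where "t \<in> {0<..<1}"
      "norm (F 1 - F 0) \<le> norm ((1 - 0) *\<^sub>R (vector_derivative f (at t) - v))"
    using mvt_general[of 0 1 F "\<lambda>t s. s *\<^sub>R (vector_derivative f (at t) - v)"] derF
    unfolding has_vector_derivative_def by force
  then show ?thesis using near'[of t] by (simp add: F_def algebra_simps)
qed

lemma norm_sub_one_le_norm_add_one: "0 \<le> Re p \<Longrightarrow> cmod (p - 1) \<le> cmod (p + 1)"
  by (simp add: cmod_def power2_eq_square algebra_simps)

lemma Schwarz_Lemma_le:
  assumes holf: "f holomorphic_on ball 0 1" and "f 0 = 0"
    and le1: "\<And>z. norm z < 1 \<Longrightarrow> norm (f z) \<le> 1" and "norm \<xi> < 1"
  shows "norm (f \<xi>) \<le> norm \<xi>"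
proof (rule field_le_mult_one_interval)
  fix s :: real assume s: "0 < s" "s < 1"
  have "norm (of_real s * f \<xi>) \<le> norm \<xi>"
  proof (rule Schwarz_Lemma(1))
    show "(\<lambda>z. of_real s * f z) holomorphic_on ball 0 1" using holf by (intro holomorphic_intros)
    show "norm (of_real s * f z) < 1" if "norm z < 1" for z
    proof -
      have "s * norm (f z) \<le> s * 1" using le1[OF that] s by (intro mult_left_mono) auto
      moreover have "norm (of_real s * f z) = s * norm (f z)" using s by (simp add: norm_mult)
      ultimately show ?thesis using s by linarith
    qed
  qed (use assms in auto)
  then show "s * norm (f \<xi>) \<le> norm \<xi>" using s by (simp add: norm_mult)
qed

lemma norm_sub_one_le_of_Re_nonneg:
  assumes holp: "p holomorphic_on ball 0 1" and "p 0 = 1"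
    and Re_nonneg: "\<And>z. norm z < 1 \<Longrightarrow> 0 \<le> Re (p z)" and z: "norm z < 1"
  shows "cmod (p z - 1) \<le> cmod z * cmod (p z + 1)"
proof -
  have nz: "p \<zeta> + 1 \<noteq> 0" if "norm \<zeta> < 1" for \<zeta>
    using Re_nonneg[OF that] by (auto simp: complex_eq_iff)
  define \<omega> where "\<omega> \<zeta> = (p \<zeta> - 1) / (p \<zeta> + 1)" for \<zeta>
  have "cmod (\<omega> z) \<le> cmod z"
  proof (rule Schwarz_Lemma_le[OF _ _ _ z])
    show "\<omega> holomorphic_on ball 0 1"
      unfolding \<omega>_def using holp nz by (intro holomorphic_intros) auto
    show "norm (\<omega> \<zeta>) \<le> 1" if "norm \<zeta> < 1" for \<zeta>
      using norm_sub_one_le_norm_add_one[OF Re_nonneg[OF that]] nz[OF that]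
      by (simp add: \<omega>_def norm_divide divide_le_eq_1)
  qed (simp add: \<omega>_def \<open>p 0 = 1\<close>)
  moreover have "p z - 1 = \<omega> z * (p z + 1)" using nz[OF z] by (simp add: \<omega>_def)
  ultimately show ?thesis by (simp add: norm_mult mult_right_mono)
qed

text \<open>The set of all \<open>p\<close> with \<open>|p - 1| \<le> r |p + 1|\<close> is the disk with centre \<open>(1 + r\<^sup>2)/(1 - r\<^sup>2)\<close> and
  radius \<open>2r/(1 - r\<^sup>2)\<close>, which the affine map below sends onto the disk with centre \<open>1/2\<close> and radius \<open>r\<close>.\<close>
lemma norm_affine_le_of_norm_sub_one_le:
  fixes p :: complex and r :: real
  assumes r: "0 \<le> r" "r < 1" and hp: "cmod (p - 1) \<le> r * cmod (p + 1)"
  shows "cmod (of_real ((1 - r\<^sup>2) / 2) * p - of_real (r\<^sup>2 / 2)) \<le> 1 / 2 + r"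
proof -
  obtain x y where p: "p = Complex x y" by (cases p)
  have "(cmod (p - 1))\<^sup>2 \<le> (r * cmod (p + 1))\<^sup>2"
    using hp by (intro power_mono) auto
  then have disk: "(x - 1)\<^sup>2 + y\<^sup>2 \<le> r\<^sup>2 * ((x + 1)\<^sup>2 + y\<^sup>2)"
    by (simp add: p cmod_def power_mult_distrib)
  define q where "q = of_real ((1 - r\<^sup>2) / 2) * p - of_real (r\<^sup>2 / 2) - 1 / 2"
  have "q = Complex ((1 - r\<^sup>2) / 2 * x - (1 + r\<^sup>2) / 2) ((1 - r\<^sup>2) / 2 * y)"
    by (simp add: q_def p complex_eq_iff field_simps)
  then have "(cmod q)\<^sup>2 = ((1 - r\<^sup>2) / 2 * x - (1 + r\<^sup>2) / 2)\<^sup>2 + ((1 - r\<^sup>2) / 2 * y)\<^sup>2"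
    by (simp only: cmod_power2 complex.sel)
  also have "\<dots> - r\<^sup>2 = (1 - r\<^sup>2) / 4 * ((x - 1)\<^sup>2 + y\<^sup>2 - r\<^sup>2 * ((x + 1)\<^sup>2 + y\<^sup>2))"
    by (simp add: power2_eq_square field_simps)
  also have "\<dots> \<le> 0"
    using disk r by (intro mult_nonneg_nonpos) (auto simp: power_le_one)
  finally have "cmod q \<le> r"
    using r by (simp add: power2_le_iff_abs_le)
  then show ?thesis
    using norm_triangle_ineq[of q "1 / 2"] by (simp add: q_def)
qed

definition u_transform :: "(complex \<Rightarrow> complex) \<Rightarrow> complex \<Rightarrow> complex" where
  "u_transform h z = h z + complex_of_real ((1 - (cmod z)\<^sup>2) / 2) * z * deriv h z"

lemma u_transform_eq: "u_transform h z = h z + (1 - z * cnj z) * z * deriv h z / 2"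
  by (simp add: u_transform_def complex_norm_square[symmetric])

lemma has_vector_derivative_u_transform_comp:
  assumes holh: "h holomorphic_on S" and "open S"
    and der: "(\<gamma> has_vector_derivative v) (at t)" and "\<gamma> t \<in> S"
  defines "c \<equiv> \<gamma> t"
  shows "((\<lambda>t. u_transform h (\<gamma> t)) has_vector_derivative
           v * deriv h c + ((1 - c * cnj c) * (v * deriv h c + c * v * deriv (deriv h) c)
             - (c * cnj v + v * cnj c) * c * deriv h c) / 2) (at t)"
proof -
  have "deriv h holomorphic_on S" using holh \<open>open S\<close> by (rule holomorphic_deriv)
  then have dh: "(h has_field_derivative deriv h c) (at c)"
    and dh': "(deriv h has_field_derivative deriv (deriv h) c) (at c)"
    using holh \<open>open S\<close> \<open>\<gamma> t \<in> S\<close> by (auto simp: c_def intro: holomorphic_derivI)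
  have "((\<lambda>t. h (\<gamma> t) + (1 - \<gamma> t * cnj (\<gamma> t)) * \<gamma> t * deriv h (\<gamma> t) / 2) has_vector_derivative
           v * deriv h c + ((1 - c * cnj c) * (v * deriv h c + c * v * deriv (deriv h) c)
             - (c * cnj v + v * cnj c) * c * deriv h c) / 2) (at t)"
    using field_vector_diff_chain_at[OF der dh[unfolded c_def]]
      field_vector_diff_chain_at[OF der dh'[unfolded c_def]]
    by (auto intro!: derivative_eq_intros der simp: o_def c_def algebra_simps)
  then show ?thesis by (simp add: u_transform_eq)
qed

lemma norm_u_transform_derivative_sub_le:
  fixes a b c v :: complex
  defines "p \<equiv> 1 + c * b / a"
  assumes "a \<noteq> 0" and "cmod c < 1" and disk: "cmod (p - 1) \<le> cmod c * cmod (p + 1)"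
  shows "cmod (v * a + ((1 - c * cnj c) * (v * a + c * v * b) - (c * cnj v + v * cnj c) * c * a) / 2
           - v * a) \<le> (1 / 2 + cmod c + (cmod c)\<^sup>2 / 2) * cmod (v * a)"
proof -
  define r where "r = cmod c"
  define q where "q = of_real ((1 - r\<^sup>2) / 2) * p - of_real (r\<^sup>2 / 2)"
  have "c * cnj c = of_real (r\<^sup>2)" unfolding r_def by (rule complex_norm_square[symmetric])
  then have "v * a + ((1 - c * cnj c) * (v * a + c * v * b) - (c * cnj v + v * cnj c) * c * a) / 2
           - v * a = v * a * q - c\<^sup>2 * a * cnj v / 2"
    using \<open>a \<noteq> 0\<close> by (simp add: p_def q_def field_simps power2_eq_square)
  also have "cmod \<dots> \<le> cmod (v * a) * cmod q + r\<^sup>2 / 2 * cmod (v * a)"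
    using norm_triangle_ineq4[of "v * a * q" "c\<^sup>2 * a * cnj v / 2"]
    by (simp add: r_def norm_mult norm_power norm_divide mult_ac)
  also have "\<dots> \<le> cmod (v * a) * (1 / 2 + r) + r\<^sup>2 / 2 * cmod (v * a)"
    using norm_affine_le_of_norm_sub_one_le[of r p] disk \<open>cmod c < 1\<close>
    by (intro add_right_mono mult_left_mono) (auto simp: r_def q_def)
  finally show ?thesis by (simp add: r_def algebra_simps)
qed

locale convex_univalent_with_inverse =
  fixes h g :: "complex \<Rightarrow> complex"
  assumes convex_univalent: "convex_univalent h"
    and holomorphic_inverse: "g holomorphic_on h ` ball 0 1"
    and deriv_inverse: "\<And>z. z \<in> ball 0 1 \<Longrightarrow> deriv h z * deriv g (h z) = 1"
    and inverse: "\<And>z. z \<in> ball 0 1 \<Longrightarrow> g (h z) = z"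
begin

lemma holomorphic: "h holomorphic_on ball 0 1"
  and inj: "inj_on h (ball 0 1)"
  and convex_image: "convex (h ` ball 0 1)"
  using convex_univalent by (auto simp: convex_univalent_def)

lemma deriv_nonzero: "cmod z < 1 \<Longrightarrow> deriv h z \<noteq> 0"
  using deriv_inverse[of z] by auto

lemma inverse_has_field_derivative:
  assumes "cmod z < 1"
  shows "(g has_field_derivative inverse (deriv h z)) (at (h z))"
proof -
  have "open (h ` ball 0 1)" by (rule open_mapping_thm3[OF holomorphic open_ball inj])
  then have "(g has_field_derivative deriv g (h z)) (at (h z))"
    using assms by (intro holomorphic_derivI[OF holomorphic_inverse]) auto
  moreover have "deriv g (h z) = inverse (deriv h z)"
    using deriv_inverse[of z] assms by (simp add: field_simps deriv_nonzero)
  ultimately show ?thesis by simp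
qed

text \<open>With \<open>c = z\<^sub>1 / z\<^sub>2\<close>, the map \<open>\<xi> \<mapsto> g ((1 - t) h (c \<xi>) + t h \<xi>)\<close> is well defined by convexity,
  fixes \<open>0\<close> and maps the unit disk into itself, so the Schwarz lemma bounds its value at \<open>z\<^sub>2\<close>.\<close>
lemma combination_in_image_cball:
  assumes "cmod z1 \<le> cmod z2" "cmod z2 < 1" "0 \<le> t" "t \<le> 1"
  shows "(1 - t) *\<^sub>R h z1 + t *\<^sub>R h z2 \<in> h ` cball 0 (cmod z2)"
proof (cases "z2 = 0")
  case True
  then show ?thesis using assms by (simp flip: scaleR_add_left)
next
  case False
  define c where "c = z1 / z2"
  have c_mult: "c * \<xi> \<in> ball 0 1" if "\<xi> \<in> ball 0 1" for \<xi>
  proof -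
    have "cmod c \<le> 1" using assms False by (simp add: c_def norm_divide divide_le_eq_1)
    then have "cmod (c * \<xi>) \<le> cmod \<xi>" by (simp add: norm_mult mult_left_le_one_le)
    then show ?thesis using that by simp
  qed
  define F where "F \<xi> = (1 - t) *\<^sub>R h (c * \<xi>) + t *\<^sub>R h \<xi>" for \<xi>
  have F_in: "F \<xi> \<in> h ` ball 0 1" if "\<xi> \<in> ball 0 1" for \<xi>
    unfolding F_def using that c_mult assms by (intro convex_alt[THEN iffD1, OF convex_image, rule_format]) auto
  have "F holomorphic_on ball 0 1"
  proof -
    have "(h \<circ> (\<lambda>\<xi>. c * \<xi>)) holomorphic_on ball 0 1"
      by (rule holomorphic_on_compose_gen[OF _ holomorphic]) (use c_mult in \<open>auto intro: holomorphic_intros\<close>)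
    then show ?thesis
      unfolding F_def scaleR_conv_of_real o_def using holomorphic by (intro holomorphic_intros)
  qed
  then have "(g \<circ> F) holomorphic_on ball 0 1"
    using F_in by (intro holomorphic_on_compose_gen[OF _ holomorphic_inverse]) auto
  moreover have "(g \<circ> F) 0 = 0"
    using inverse[of 0] by (simp add: F_def flip: scaleR_add_left)
  moreover have "cmod ((g \<circ> F) \<xi>) < 1" if "cmod \<xi> < 1" for \<xi>
    using F_in[of \<xi>] that inverse by auto
  ultimately have "cmod ((g \<circ> F) z2) \<le> cmod z2"
    by (rule Schwarz_Lemma(1)) (use assms in auto)
  moreover obtain \<zeta> where "\<zeta> \<in> ball 0 1" "F z2 = h \<zeta>" using F_in[of z2] assms by auto
  moreover have "c * z2 = z1" using False by (simp add: c_def)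
  ultimately show ?thesis by (auto simp: F_def inverse)
qed

lemma convex_image_cball:
  assumes "\<rho> < 1"
  shows "convex (h ` cball 0 \<rho>)"
proof (unfold convex_alt, intro ballI allI impI)
  fix x y and u :: real assume "x \<in> h ` cball 0 \<rho>" "y \<in> h ` cball 0 \<rho>" and u: "0 \<le> u \<and> u \<le> 1"
  then obtain z1 z2 where z: "x = h z1" "y = h z2" "cmod z1 \<le> \<rho>" "cmod z2 \<le> \<rho>" by auto
  show "(1 - u) *\<^sub>R x + u *\<^sub>R y \<in> h ` cball 0 \<rho>"
  proof (cases "cmod z1 \<le> cmod z2")
    case True
    then show ?thesis
      using combination_in_image_cball[of z1 z2 u] z u assms by fastforce
  next
    case False
    then have "u *\<^sub>R y + (1 - u) *\<^sub>R x \<in> h ` cball 0 (cmod z1)"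
      using combination_in_image_cball[of z2 z1 "1 - u"] z u assms by simp
    then show ?thesis using z by (auto simp: add.commute)
  qed
qed

lemma preimage_segment_in_cball:
  assumes "cmod z1 \<le> \<rho>" "cmod z2 \<le> \<rho>" "\<rho> < 1" "t \<in> {0..1}"
  defines "\<zeta> \<equiv> g (h z1 + of_real t * (h z2 - h z1))"
  shows "cmod \<zeta> \<le> \<rho>" and "h \<zeta> = h z1 + of_real t * (h z2 - h z1)"
proof -
  have "(1 - t) *\<^sub>R h z1 + t *\<^sub>R h z2 \<in> h ` cball 0 \<rho>"
    using assms by (intro convex_alt[THEN iffD1, OF convex_image_cball, rule_format]) auto
  then obtain \<xi> where \<xi>: "cmod \<xi> \<le> \<rho>" "h z1 + of_real t * (h z2 - h z1) = h \<xi>"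
    by (auto simp: scaleR_conv_of_real algebra_simps)
  then have "\<zeta> = \<xi>" using inverse[of \<xi>] \<open>\<rho> < 1\<close> by (simp add: \<zeta>_def)
  then show "cmod \<zeta> \<le> \<rho>" "h \<zeta> = h z1 + of_real t * (h z2 - h z1)" using \<xi> by auto
qed

lemma preimage_line_has_vector_derivative:
  fixes a d :: complex and t :: real
  defines "c \<equiv> g (a + of_real t * d)"
  assumes "cmod c < 1" and "h c = a + of_real t * d"
  shows "((\<lambda>s. g (a + of_real s * d)) has_vector_derivative d / deriv h c) (at t)"
proof -
  have "((\<lambda>s. a + of_real s * d) has_vector_derivative d) (at t)"
    by (auto intro!: derivative_eq_intros)
  from field_vector_diff_chain_at[OF this, of g] inverse_has_field_derivative[OF \<open>cmod c < 1\<close>]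
  show ?thesis using assms by (simp add: o_def divide_inverse)
qed

text \<open>The preimage \<open>\<gamma>\<close> of the segment from \<open>h z\<close> to \<open>h w\<close> stays in \<open>|\<zeta>| \<le> |z|\<close>, so \<open>|\<gamma>|\<^sup>2\<close> has a
  one-sided maximum at \<open>t = 0\<close>, where its derivative is \<open>2 Re ((h w - h z) z\<^sup>* / h'(z))\<close>.\<close>
lemma supporting_half_plane:
  assumes z: "cmod z < 1" and w: "cmod w \<le> cmod z"
  shows "Re ((h w - h z) * cnj (z * deriv h z)) \<le> 0"
proof -
  define d where "d = h w - h z"
  define \<gamma> where "\<gamma> = (\<lambda>t::real. g (h z + of_real t * d))"
  define v where "v = d / deriv h z"
  have "\<gamma> 0 = z" using inverse[of z] z by (simp add: \<gamma>_def)
  then have "(\<gamma> has_vector_derivative v) (at 0)"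
    using preimage_line_has_vector_derivative[of "h z" 0 d] z by (simp add: \<gamma>_def v_def)
  with \<open>\<gamma> 0 = z\<close>
  have der: "((\<lambda>t. Re (\<gamma> t * cnj (\<gamma> t))) has_real_derivative 2 * Re (v * cnj z)) (at 0)"
    by (auto intro!: derivative_eq_intros simp: has_vector_derivative_complex_iff)
  have max: "Re (\<gamma> t * cnj (\<gamma> t)) \<le> Re (\<gamma> 0 * cnj (\<gamma> 0))" if "0 < t" "t < 0 + 1" for t
  proof -
    have "cmod (\<gamma> t) \<le> cmod z"
      using preimage_segment_in_cball(1)[of z "cmod z" w t] z w that by (simp add: \<gamma>_def d_def)
    then show ?thesis using \<open>\<gamma> 0 = z\<close> power_mono[OF _ norm_ge_zero, of "\<gamma> t" "cmod z" 2]
      by (simp add: complex_mult_cnj cmod_power2)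
  qed
  have "Re (v * cnj z) \<le> 0"
    using has_real_derivative_nonpos_at_right_max[OF der zero_less_one max] by simp
  moreover have "v * cnj z = d * cnj z / deriv h z" by (simp add: v_def)
  ultimately have "Re (d * cnj z * cnj (deriv h z)) \<le> 0"
    by (simp only: Re_complex_div_le_0)
  then show ?thesis
    by (simp only: d_def complex_cnj_mult mult.assoc)
qed

text \<open>By the supporting half plane, \<open>\<theta> \<mapsto> Re (h (z e\<^sup>i\<^sup>\<theta>) M\<^sup>*)\<close> with \<open>M = z h'(z)\<close> is maximal at
  \<open>\<theta> = 0\<close>, and its second derivative there is \<open>-Re (1 + z h''(z) / h'(z)) |M|\<^sup>2\<close>.\<close>
lemma Re_convexity_quotient_nonneg:
  assumes z: "cmod z < 1"
  shows "0 \<le> Re (1 + z * deriv (deriv h) z / deriv h z)"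
proof (cases "z = 0")
  case False
  define M where "M = z * deriv h z"
  define e where "e = (\<lambda>\<theta>. z * cis \<theta>)"
  have e_in: "e \<theta> \<in> ball 0 1" for \<theta> using z by (simp add: e_def norm_mult)
  have de: "(e has_vector_derivative \<i> * e \<theta>) (at \<theta>)" for \<theta>
    unfolding e_def has_vector_derivative_def by (auto intro!: derivative_eq_intros simp: algebra_simps)
  have dh: "(h has_field_derivative deriv h (e \<theta>)) (at (e \<theta>))"
    and dh': "(deriv h has_field_derivative deriv (deriv h) (e \<theta>)) (at (e \<theta>))" for \<theta>
    using e_in holomorphic holomorphic_deriv[OF holomorphic open_ball]
    by (auto intro: holomorphic_derivI)
  have "e 0 = z" by (simp add: e_def)
  have "((\<lambda>\<theta>. h (e \<theta>) * cnj M) has_vector_derivative \<i> * e \<theta> * deriv h (e \<theta>) * cnj M) (at \<theta>)"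
    for \<theta>
    using has_vector_derivative_mult_left[OF field_vector_diff_chain_at[OF de dh]] by (simp add: o_def)
  then have dA: "DERIV (\<lambda>\<theta>. Re (h (e \<theta>) * cnj M)) \<theta> :> Re (\<i> * e \<theta> * deriv h (e \<theta>) * cnj M)"
    for \<theta>
    unfolding has_vector_derivative_complex_iff by blast
  have "((\<lambda>\<theta>. \<i> * (e \<theta> * deriv h (e \<theta>)) * cnj M) has_vector_derivative
      \<i> * (e 0 * (\<i> * e 0 * deriv (deriv h) (e 0)) + \<i> * e 0 * deriv h (e 0)) * cnj M) (at 0)"
    by (intro has_vector_derivative_mult_left has_vector_derivative_mult_right has_vector_derivative_mult
        de field_vector_diff_chain_at[OF de dh', unfolded o_def])
  then have "((\<lambda>\<theta>. \<i> * e \<theta> * deriv h (e \<theta>) * cnj M) has_vector_derivative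
      - ((M + z\<^sup>2 * deriv (deriv h) z) * cnj M)) (at 0)"
    by (simp add: \<open>e 0 = z\<close> M_def mult.assoc power2_eq_square algebra_simps)
  then have dA': "DERIV (\<lambda>\<theta>. Re (\<i> * e \<theta> * deriv h (e \<theta>) * cnj M)) 0 :>
      - Re ((M + z\<^sup>2 * deriv (deriv h) z) * cnj M)"
    unfolding has_vector_derivative_complex_iff by simp
  have "Re (h (e \<theta>) * cnj M) \<le> Re (h (e 0) * cnj M)" for \<theta>
    using supporting_half_plane[OF z, of "e \<theta>"] e_in \<open>e 0 = z\<close>
    by (simp add: M_def e_def norm_mult algebra_simps)
  from second_derivative_nonpos_at_max[OF dA dA' this]
  have "0 \<le> Re ((M + z\<^sup>2 * deriv (deriv h) z) * cnj M)" by simp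
  moreover have "(M + z\<^sup>2 * deriv (deriv h) z) * cnj M
      = (1 + z * deriv (deriv h) z / deriv h z) * of_real ((cmod M)\<^sup>2)"
    unfolding complex_norm_square using deriv_nonzero[OF z]
    by (simp add: M_def field_simps power2_eq_square)
  moreover have "M \<noteq> 0" using False deriv_nonzero[OF z] by (simp add: M_def)
  ultimately show ?thesis by (simp add: zero_le_mult_iff)
qed simp

lemma convexity_quotient_in_disk:
  assumes "cmod z < 1"
  defines "p \<equiv> 1 + z * deriv (deriv h) z / deriv h z"
  shows "cmod (p - 1) \<le> cmod z * cmod (p + 1)"
  unfolding p_def
proof (rule norm_sub_one_le_of_Re_nonneg[where p = "\<lambda>z. 1 + z * deriv (deriv h) z / deriv h z"])
  have "deriv h holomorphic_on ball 0 1" by (rule holomorphic_deriv[OF holomorphic open_ball])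
  moreover have "deriv (deriv h) holomorphic_on ball 0 1" by (rule holomorphic_deriv[OF calculation open_ball])
  ultimately show "(\<lambda>z. 1 + z * deriv (deriv h) z / deriv h z) holomorphic_on ball 0 1"
    using holomorphic deriv_nonzero by (intro holomorphic_intros) auto
qed (use assms Re_convexity_quotient_nonneg in auto)

lemma u_transform_comp_derivative_near:
  assumes c: "cmod (\<gamma> t) < 1" and der: "(\<gamma> has_vector_derivative \<Delta> / deriv h (\<gamma> t)) (at t)"
  shows "\<exists>D. ((\<lambda>t. u_transform h (\<gamma> t)) has_vector_derivative D) (at t) \<and>
           cmod (D - \<Delta>) \<le> (1 / 2 + cmod (\<gamma> t) + (cmod (\<gamma> t))\<^sup>2 / 2) * cmod \<Delta>"
proof -
  define c where "c = \<gamma> t"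
  have "deriv h c \<noteq> 0" using deriv_nonzero[OF c] by (simp add: c_def)
  with c norm_u_transform_derivative_sub_le[OF _ _ convexity_quotient_in_disk[OF c],
      where v = "\<Delta> / deriv h c"]
    has_vector_derivative_u_transform_comp[OF holomorphic open_ball der]
  show ?thesis by (auto simp: c_def)
qed

lemma u_transform_inj_on: "inj_on (u_transform h) (ball 0 (sqrt 2 - 1))"
proof (rule inj_onI)
  fix z1 z2
  assume z12: "z1 \<in> ball 0 (sqrt 2 - 1)" "z2 \<in> ball 0 (sqrt 2 - 1)"
    and eq: "u_transform h z1 = u_transform h z2"
  define \<rho> where "\<rho> = max (cmod z1) (cmod z2)"
  define k where "k = 1 / 2 + \<rho> + \<rho>\<^sup>2 / 2"
  have "\<rho> < sqrt 2 - 1" using z12 by (simp add: \<rho>_def)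
  moreover have "sqrt 2 < 2" using real_sqrt_less_mono[of 2 4] by simp
  ultimately have "\<rho> < 1" by simp
  have "(\<rho> + 1)\<^sup>2 < (sqrt 2)\<^sup>2"
    using \<open>\<rho> < sqrt 2 - 1\<close> by (intro power_strict_mono) (auto simp: \<rho>_def le_max_iff_disj)
  then have "k < 1" by (simp add: k_def power2_eq_square algebra_simps)
  define \<Delta> where "\<Delta> = h z2 - h z1"
  define \<gamma> where "\<gamma> = (\<lambda>t::real. g (h z1 + of_real t * \<Delta>))"
  have "\<exists>D. ((\<lambda>t. u_transform h (\<gamma> t)) has_vector_derivative D) (at t) \<and> cmod (D - \<Delta>) \<le> k * cmod \<Delta>"
    if t: "t \<in> {0..1}" for t
  proof -
    have \<gamma>_in: "cmod (\<gamma> t) \<le> \<rho>" "h (\<gamma> t) = h z1 + of_real t * \<Delta>"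
      using preimage_segment_in_cball[of z1 \<rho> z2 t] t \<open>\<rho> < 1\<close> by (auto simp: \<gamma>_def \<Delta>_def \<rho>_def)
    then have "(\<gamma> has_vector_derivative \<Delta> / deriv h (\<gamma> t)) (at t)"
      using preimage_line_has_vector_derivative[of "h z1" t \<Delta>] \<open>\<rho> < 1\<close> by (simp add: \<gamma>_def)
    moreover have "(1 / 2 + cmod (\<gamma> t) + (cmod (\<gamma> t))\<^sup>2 / 2) * cmod \<Delta> \<le> k * cmod \<Delta>"
      using \<gamma>_in power_mono[OF \<gamma>_in(1) norm_ge_zero, of 2]
      by (intro mult_right_mono) (auto simp: k_def)
    ultimately show ?thesis
      using u_transform_comp_derivative_near[of \<gamma> t \<Delta>] \<gamma>_in \<open>\<rho> < 1\<close> by (meson le_less_trans order_trans)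
  qed
  then have "cmod (u_transform h (\<gamma> 1) - u_transform h (\<gamma> 0) - \<Delta>) \<le> k * cmod \<Delta>"
    by (rule norm_diff_le_of_derivative_near)
  moreover have "\<gamma> 0 = z1" "\<gamma> 1 = z2"
    using inverse z12 \<open>\<rho> < 1\<close> by (auto simp: \<gamma>_def \<Delta>_def \<rho>_def)
  ultimately have "cmod \<Delta> \<le> k * cmod \<Delta>" using eq by simp
  with \<open>k < 1\<close> have "h z1 = h z2"
    by (simp add: \<Delta>_def mult_le_cancel_right1)
  then show "z1 = z2"
    using inj z12 \<open>sqrt 2 < 2\<close> by (auto simp: inj_on_def)
qed

end

theorem corollary2:
  fixes h :: "complex \<Rightarrow> complex"
  assumes "convex_univalent h"
  shows "inj_on (\<lambda>z. h z + complex_of_real ((1 - (cmod z)^2) / 2) * z * deriv h z)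
                (ball 0 (sqrt 2 - 1))"
proof -
  have "h holomorphic_on ball 0 1" "inj_on h (ball 0 1)"
    using assms by (auto simp: convex_univalent_def)
  then obtain g where "g holomorphic_on h ` ball 0 1"
      "\<And>z. z \<in> ball 0 1 \<Longrightarrow> deriv h z * deriv g (h z) = 1"
      "\<And>z. z \<in> ball 0 1 \<Longrightarrow> g (h z) = z"
    using holomorphic_has_inverse[OF _ open_ball] by metis
  with assms interpret convex_univalent_with_inverse h g
    by unfold_locales auto
  show ?thesis
    using u_transform_inj_on by (simp add: u_transform_def[abs_def])
qed

end
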